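(* There exists a comeager set $\mathcal S\subseteq\mathcal G$ such that for every $G\in\mathcal S$ and every $H\in\mathcal G$, the groups $\overline G$ and $\overline H$ are elementarily equivalent (as structures in the first-order language of group theory) if and only if $H\in\mathcal S$.
   Context: Let $\mathbb N=\{1,2,3,\dots\}$. Equip $\mathbb N^{\mathbb N\times\mathbb N}$ with the product topology of the discrete topology on $\mathbb N$. Let $\mathcal G$ be the subspace consisting of those $A\in\mathbb N^{\mathbb N\times\mathbb N}$ that are the multiplication table of a group on the underlying set $\mathbb N$ whose identity element is $1$. For $G\in\mathcal G$, $\overline G$ denotes the group on $\mathbb N$ with multiplication table $G$. The language of group theory has a binary function symbol (multiplication) and a constant symbol $1$; two structures are elementarily equivalent if they satisfy the same first-order sentences of this language. *)

theory Defs
  imports "HOL-Analysis.Analysis"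
begin

definition Npos :: "nat set" where "Npos = {n. 1 \<le> n}"

text \<open>The space N^(N x N) with the product of discrete topologies; points are
  extensional functions on N x N (value undefined outside N x N).\<close>
definition table_space :: "(nat \<times> nat \<Rightarrow> nat) topology" where
  "table_space = product_topology (\<lambda>_. discrete_topology Npos) (Npos \<times> Npos)"

definition is_group_table :: "(nat \<times> nat \<Rightarrow> nat) \<Rightarrow> bool" where
  "is_group_table A \<longleftrightarrow>
     A \<in> topspace table_space \<and>
     (\<forall>a\<in>Npos. \<forall>b\<in>Npos. \<forall>c\<in>Npos. A (A (a, b), c) = A (a, A (b, c))) \<and>
     (\<forall>a\<in>Npos. A (1, a) = a \<and> A (a, 1) = a) \<and>
     (\<forall>a\<in>Npos. \<exists>b\<in>Npos. A (a, b) = 1 \<and> A (b, a) = 1)"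

definition group_tables :: "(nat \<times> nat \<Rightarrow> nat) set" where
  "group_tables = {A. is_group_table A}"

definition group_space :: "(nat \<times> nat \<Rightarrow> nat) topology" where
  "group_space = subtopology table_space group_tables"

definition nowhere_dense_in :: "'a topology \<Rightarrow> 'a set \<Rightarrow> bool" where
  "nowhere_dense_in T A \<longleftrightarrow> A \<subseteq> topspace T \<and> T interior_of (T closure_of A) = {}"

definition meager_in :: "'a topology \<Rightarrow> 'a set \<Rightarrow> bool" where
  "meager_in T A \<longleftrightarrow>
     (\<exists>F. countable F \<and> (\<forall>B\<in>F. nowhere_dense_in T B) \<and> A \<subseteq> \<Union>F)"

definition comeager_in :: "'a topology \<Rightarrow> 'a set \<Rightarrow> bool" where
  "comeager_in T S \<longleftrightarrow> S \<subseteq> topspace T \<and> meager_in T (topspace T - S)"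

datatype gterm = GVar nat | GOne | GMul gterm gterm

datatype gform =
    GEq gterm gterm
  | GFalse
  | GNot gform
  | GAnd gform gform
  | GOr gform gform
  | GImp gform gform
  | GEx nat gform
  | GAll nat gform

fun tvars :: "gterm \<Rightarrow> nat set" where
  "tvars (GVar x) = {x}"
| "tvars GOne = {}"
| "tvars (GMul s t) = tvars s \<union> tvars t"

fun fvars :: "gform \<Rightarrow> nat set" where
  "fvars (GEq s t) = tvars s \<union> tvars t"
| "fvars GFalse = {}"
| "fvars (GNot p) = fvars p"
| "fvars (GAnd p q) = fvars p \<union> fvars q"
| "fvars (GOr p q) = fvars p \<union> fvars q"
| "fvars (GImp p q) = fvars p \<union> fvars q"
| "fvars (GEx x p) = fvars p - {x}"
| "fvars (GAll x p) = fvars p - {x}"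

definition is_sentence :: "gform \<Rightarrow> bool" where
  "is_sentence p \<longleftrightarrow> fvars p = {}"

fun teval :: "(nat \<times> nat \<Rightarrow> nat) \<Rightarrow> (nat \<Rightarrow> nat) \<Rightarrow> gterm \<Rightarrow> nat" where
  "teval A e (GVar x) = e x"
| "teval A e GOne = 1"
| "teval A e (GMul s t) = A (teval A e s, teval A e t)"

fun sat :: "(nat \<times> nat \<Rightarrow> nat) \<Rightarrow> (nat \<Rightarrow> nat) \<Rightarrow> gform \<Rightarrow> bool" where
  "sat A e (GEq s t) \<longleftrightarrow> teval A e s = teval A e t"
| "sat A e GFalse \<longleftrightarrow> False"
| "sat A e (GNot p) \<longleftrightarrow> \<not> sat A e p"
| "sat A e (GAnd p q) \<longleftrightarrow> sat A e p \<and> sat A e q"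
| "sat A e (GOr p q) \<longleftrightarrow> sat A e p \<or> sat A e q"
| "sat A e (GImp p q) \<longleftrightarrow> (sat A e p \<longrightarrow> sat A e q)"
| "sat A e (GEx x p) \<longleftrightarrow> (\<exists>a\<in>Npos. sat A (e(x := a)) p)"
| "sat A e (GAll x p) \<longleftrightarrow> (\<forall>a\<in>Npos. sat A (e(x := a)) p)"

text \<open>A sentence holds in the structure (env irrelevant; we use the constant env 1).\<close>
definition models :: "(nat \<times> nat \<Rightarrow> nat) \<Rightarrow> gform \<Rightarrow> bool" where
  "models A p \<longleftrightarrow> sat A (\<lambda>_. 1) p"

definition elem_equiv :: "(nat \<times> nat \<Rightarrow> nat) \<Rightarrow> (nat \<times> nat \<Rightarrow> nat) \<Rightarrow> bool" where
  "elem_equiv A B \<longleftrightarrow> (\<forall>p. is_sentence p \<longrightarrow> (models A p \<longleftrightarrow> models B p))"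

end

(*
  For every sentence p, the set of group tables satisfying p has the Baire property: an atomic
  formula inspects only finitely many entries of a table, so it defines an open set, and the
  quantifiers range over the countable set N.  This set is also invariant under relabelling the
  elements of N by permutations fixing 1, and relabelling is topologically transitive: given
  nonempty open sets U and V, pick G in U and H in V; a suitable coding of the direct product
  G x H as a table on N lies in U, and a relabelling of it lies in V.  By the topological
  zero-one law the set is therefore meager or comeager.  Choosing the comeager alternative for
  each of the countably many sentences gives a comeager set S whose members all have the same
  theory, and a group table has that theory iff it lies in S.
*)
theory Submission
  imports Defs "HOL-Combinatorics.Permutations"
begin

section \<open>Baire category\<close>

lemma meager_in_subset: "meager_in T A \<Longrightarrow> B \<subseteq> A \<Longrightarrow> meager_in T B"
  unfolding meager_in_def by (meson order_trans)

lemma meager_in_empty [simp]: "meager_in T {}"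
  unfolding meager_in_def by (rule exI[of _ "{}"]) auto

lemma nowhere_dense_imp_meager_in: "nowhere_dense_in T A \<Longrightarrow> meager_in T A"
  unfolding meager_in_def by (rule exI[of _ "{A}"]) auto

lemma meager_in_UN:
  assumes "countable I" and "\<And>i. i \<in> I \<Longrightarrow> meager_in T (A i)"
  shows "meager_in T (\<Union>i\<in>I. A i)"
proof -
  obtain F where F: "\<And>i. i \<in> I \<Longrightarrow> countable (F i) \<and> (\<forall>B\<in>F i. nowhere_dense_in T B) \<and> A i \<subseteq> \<Union>(F i)"
    using assms(2) unfolding meager_in_def by metis
  show ?thesis
    unfolding meager_in_def
  proof (intro exI conjI)
    show "countable (\<Union>i\<in>I. F i)"
      using F by (intro countable_UN assms(1)) simp
    show "\<forall>B\<in>(\<Union>i\<in>I. F i). nowhere_dense_in T B"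
      using F by simp
    show "(\<Union>i\<in>I. A i) \<subseteq> \<Union>(\<Union>i\<in>I. F i)"
    proof (rule UN_least)
      fix i assume i: "i \<in> I"
      have "A i \<subseteq> \<Union>(F i)"
        using F[OF i] by simp
      also have "\<dots> \<subseteq> \<Union>(\<Union>i\<in>I. F i)"
        using i by (intro Union_mono UN_upper)
      finally show "A i \<subseteq> \<Union>(\<Union>i\<in>I. F i)" .
    qed
  qed
qed

lemma meager_in_Un:
  assumes "meager_in T A" and "meager_in T B"
  shows "meager_in T (A \<union> B)"
proof -
  have "meager_in T (\<Union>i\<in>{A, B}. i)"
    by (rule meager_in_UN) (use assms in auto)
  then show ?thesis
    by simp
qed

lemma nowhere_dense_in_closed_empty_interior:
  assumes "closedin T A" and "T interior_of A = {}"
  shows "nowhere_dense_in T A"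
  using assms by (simp add: nowhere_dense_in_def closedin_subset closure_of_closedin)

lemma nowhere_dense_in_boundary_open:
  assumes "openin T W"
  shows "nowhere_dense_in T (T closure_of W - W)"
proof (rule nowhere_dense_in_closed_empty_interior)
  show "closedin T (T closure_of W - W)"
    using assms by (simp add: closedin_diff)
  let ?I = "T interior_of (T closure_of W - W)"
  have "?I \<inter> W = {}"
    using interior_of_subset by fastforce
  then have "?I \<inter> T closure_of W = {}"
    by (simp add: openin_Int_closure_of_eq_empty)
  then show "?I = {}"
    using interior_of_subset by fastforce
qed

lemma nowhere_dense_in_homeomorphic_image:
  assumes f: "homeomorphic_map T T f" and A: "nowhere_dense_in T A"
  shows "nowhere_dense_in T (f ` A)"
proof -
  have sub: "A \<subseteq> topspace T" using A unfolding nowhere_dense_in_def by blast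
  have "T interior_of (T closure_of (f ` A)) = f ` (T interior_of (T closure_of A))"
    by (simp add: homeomorphic_map_closure_of[OF f sub]
        homeomorphic_map_interior_of[OF f closure_of_subset_topspace])
  moreover have "f ` A \<subseteq> topspace T"
    using sub homeomorphic_imp_surjective_map[OF f] by blast
  ultimately show ?thesis using A unfolding nowhere_dense_in_def by simp
qed

lemma meager_in_homeomorphic_image:
  assumes f: "homeomorphic_map T T f" and "meager_in T A"
  shows "meager_in T (f ` A)"
proof -
  obtain F where F: "countable F" "\<forall>B\<in>F. nowhere_dense_in T B" "A \<subseteq> \<Union>F"
    using assms(2) unfolding meager_in_def by blast
  show ?thesis
    unfolding meager_in_def
  proof (intro exI conjI)
    show "countable ((`) f ` F)" "\<forall>B\<in>(`) f ` F. nowhere_dense_in T B"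
      using F nowhere_dense_in_homeomorphic_image[OF f] by auto
    show "f ` A \<subseteq> \<Union>((`) f ` F)"
      using F(3) by blast
  qed
qed

definition baire_property_in :: "'a topology \<Rightarrow> 'a set \<Rightarrow> bool" where
  "baire_property_in T A \<longleftrightarrow> A \<subseteq> topspace T \<and>
     (\<exists>W. openin T W \<and> meager_in T (A - W) \<and> meager_in T (W - A))"

lemma baire_property_in_open: "openin T W \<Longrightarrow> baire_property_in T W"
  unfolding baire_property_in_def using openin_subset by fastforce

lemma baire_property_in_complement:
  assumes "baire_property_in T A"
  shows "baire_property_in T (topspace T - A)"
proof -
  obtain W where W: "openin T W" "meager_in T (A - W)" "meager_in T (W - A)"
    using assms unfolding baire_property_in_def by blast
  define W' where "W' = topspace T - T closure_of W"
  have "(topspace T - A) - W' \<subseteq> (W - A) \<union> (T closure_of W - W)"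
    unfolding W'_def by auto
  then have "meager_in T ((topspace T - A) - W')"
    by (rule meager_in_subset[OF meager_in_Un[OF W(3)
          nowhere_dense_imp_meager_in[OF nowhere_dense_in_boundary_open[OF W(1)]]]])
  moreover have "W' - (topspace T - A) \<subseteq> A - W"
    unfolding W'_def using closure_of_subset openin_subset[OF W(1)] by fastforce
  then have "meager_in T (W' - (topspace T - A))"
    by (rule meager_in_subset[OF W(2)])
  moreover have "openin T W'"
    unfolding W'_def by (simp add: openin_diff)
  ultimately show ?thesis
    unfolding baire_property_in_def by (intro conjI exI[of _ W']) auto
qed

lemma baire_property_in_UN:
  assumes "countable I" and "\<And>i. i \<in> I \<Longrightarrow> baire_property_in T (A i)"
  shows "baire_property_in T (\<Union>i\<in>I. A i)"
proof -
  obtain W where W: "\<And>i. i \<in> I \<Longrightarrow> openin T (W i) \<and> meager_in T (A i - W i) \<and> meager_in T (W i - A i)"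
    using assms(2) unfolding baire_property_in_def by metis
  have AW: "meager_in T (\<Union>i\<in>I. A i - W i)" and WA: "meager_in T (\<Union>i\<in>I. W i - A i)"
    using W by (auto intro!: meager_in_UN assms(1))
  have "meager_in T ((\<Union>i\<in>I. A i) - (\<Union>i\<in>I. W i))"
    by (rule meager_in_subset[OF AW]) blast
  moreover have "meager_in T ((\<Union>i\<in>I. W i) - (\<Union>i\<in>I. A i))"
    by (rule meager_in_subset[OF WA]) blast
  moreover have "openin T (\<Union>i\<in>I. W i)"
    using W by blast
  moreover have "(\<Union>i\<in>I. A i) \<subseteq> topspace T"
    using assms(2) unfolding baire_property_in_def by blast
  ultimately show ?thesis
    unfolding baire_property_in_def by blast
qed

lemma baire_property_in_Un:
  assumes "baire_property_in T A" and "baire_property_in T B"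
  shows "baire_property_in T (A \<union> B)"
proof -
  have "baire_property_in T (\<Union>i\<in>{A, B}. i)"
    by (rule baire_property_in_UN) (use assms in auto)
  then show ?thesis
    by simp
qed

lemma baire_property_in_Int:
  assumes "baire_property_in T A" and "baire_property_in T B"
  shows "baire_property_in T (A \<inter> B)"
proof -
  have "A \<inter> B = topspace T - ((topspace T - A) \<union> (topspace T - B))"
    using assms unfolding baire_property_in_def by blast
  then show ?thesis
    using assms by (simp add: baire_property_in_complement baire_property_in_Un)
qed

lemma dense_open_union_of_translates:
  assumes T: "second_countable T" and W: "openin T W" "W \<noteq> {}"
    and homeo: "\<And>f. f \<in> F \<Longrightarrow> homeomorphic_map T T f"
    and transitive: "\<And>U V. openin T U \<Longrightarrow> openin T V \<Longrightarrow> U \<noteq> {} \<Longrightarrow> V \<noteq> {} \<Longrightarrow> \<exists>f\<in>F. f ` U \<inter> V \<noteq> {}"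
  shows "\<exists>G. countable G \<and> G \<subseteq> F \<and> openin T (\<Union>f\<in>G. f ` W) \<and>
           nowhere_dense_in T (topspace T - (\<Union>f\<in>G. f ` W))"
proof -
  obtain \<B> where \<B>: "countable \<B>" "\<And>V. V \<in> \<B> \<Longrightarrow> openin T V"
    and base: "\<And>U x. openin T U \<Longrightarrow> x \<in> U \<Longrightarrow> \<exists>V\<in>\<B>. x \<in> V \<and> V \<subseteq> U"
    using T unfolding second_countable_def by auto
  define \<B>' where "\<B>' = \<B> - {{}}"
  have "\<forall>V\<in>\<B>'. \<exists>f\<in>F. f ` W \<inter> V \<noteq> {}"
    using transitive[OF W(1) \<B>(2) W(2)] unfolding \<B>'_def by blast
  then obtain h where h: "\<And>V. V \<in> \<B>' \<Longrightarrow> h V \<in> F \<and> h V ` W \<inter> V \<noteq> {}"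
    by metis
  define U where "U = (\<Union>V\<in>\<B>'. h V ` W)"
  have "openin T U"
    unfolding U_def
    using homeomorphic_map_openness[OF homeo, of _ W] h openin_subset[OF W(1)] W(1) by auto
  moreover have "T interior_of (topspace T - U) = {}"
  proof (rule ccontr)
    assume "T interior_of (topspace T - U) \<noteq> {}"
    then obtain x where "x \<in> T interior_of (topspace T - U)"
      by blast
    then obtain V where V: "V \<in> \<B>" "x \<in> V" "V \<subseteq> T interior_of (topspace T - U)"
      using base[OF openin_interior_of] by blast
    then have "V \<in> \<B>'"
      unfolding \<B>'_def by blast
    moreover have "V \<inter> U = {}"
      using V(3) interior_of_subset[of T "topspace T - U"] by blast
    ultimately show False
      using h unfolding U_def by blast
  qed
  ultimately have "nowhere_dense_in T (topspace T - U)"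
    by (intro nowhere_dense_in_closed_empty_interior) auto
  moreover have "countable (h ` \<B>')" "h ` \<B>' \<subseteq> F"
    using \<B>(1) h unfolding \<B>'_def by auto
  moreover have "(\<Union>f\<in>h ` \<B>'. f ` W) = U"
    unfolding U_def by simp
  ultimately show ?thesis
    using \<open>openin T U\<close> by (intro exI[of _ "h ` \<B>'"] conjI) simp_all
qed

lemma topological_zero_one_law:
  assumes T: "second_countable T"
    and M: "baire_property_in T M"
    and homeo: "\<And>f. f \<in> F \<Longrightarrow> homeomorphic_map T T f"
    and invariant: "\<And>f x. f \<in> F \<Longrightarrow> x \<in> M \<Longrightarrow> f x \<in> M"
    and transitive: "\<And>U V. openin T U \<Longrightarrow> openin T V \<Longrightarrow> U \<noteq> {} \<Longrightarrow> V \<noteq> {} \<Longrightarrow> \<exists>f\<in>F. f ` U \<inter> V \<noteq> {}"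
  shows "meager_in T M \<or> meager_in T (topspace T - M)"
proof -
  obtain W where W: "openin T W" "meager_in T (M - W)" "meager_in T (W - M)"
    using M unfolding baire_property_in_def by blast
  show ?thesis
  proof (cases "W = {}")
    case True
    then show ?thesis using W(2) by simp
  next
    case False
    then obtain G where G: "countable G" "G \<subseteq> F"
      and nowhere_dense: "nowhere_dense_in T (topspace T - (\<Union>f\<in>G. f ` W))"
      using dense_open_union_of_translates[OF T W(1) False homeo transitive] by blast
    have "meager_in T (\<Union>f\<in>G. f ` (W - M))"
      using G by (intro meager_in_UN meager_in_homeomorphic_image[OF homeo W(3)]) auto
    then have "meager_in T ((topspace T - (\<Union>f\<in>G. f ` W)) \<union> (\<Union>f\<in>G. f ` (W - M)))"
      by (rule meager_in_Un[OF nowhere_dense_imp_meager_in[OF nowhere_dense]])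
    moreover have "topspace T - M \<subseteq> (topspace T - (\<Union>f\<in>G. f ` W)) \<union> (\<Union>f\<in>G. f ` (W - M))"
    proof
      fix x assume x: "x \<in> topspace T - M"
      show "x \<in> (topspace T - (\<Union>f\<in>G. f ` W)) \<union> (\<Union>f\<in>G. f ` (W - M))"
      proof (cases "x \<in> (\<Union>f\<in>G. f ` W)")
        case True
        then obtain f w where "f \<in> G" "w \<in> W" "x = f w"
          by blast
        moreover have "w \<notin> M"
          using invariant G(2) x calculation by blast
        ultimately show ?thesis
          by blast
      qed (use x in blast)
    qed
    ultimately show ?thesis
      using meager_in_subset by blast
  qed
qed

lemma comeager_class_of_zero_one_family:
  assumes "countable I"
    and sub: "\<And>i. i \<in> I \<Longrightarrow> P i \<subseteq> topspace T"
    and zero_one: "\<And>i. i \<in> I \<Longrightarrow> meager_in T (P i) \<or> meager_in T (topspace T - P i)"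
  shows "\<exists>S. comeager_in T S \<and> (\<forall>x\<in>S. \<forall>y\<in>topspace T. (\<forall>i\<in>I. x \<in> P i \<longleftrightarrow> y \<in> P i) \<longleftrightarrow> y \<in> S)"
proof -
  define C where "C i = (if meager_in T (P i) then topspace T - P i else P i)" for i
  have C_meager: "meager_in T (topspace T - C i)" if "i \<in> I" for i
    using zero_one[OF that] sub[OF that]
    by (cases "meager_in T (P i)") (simp_all add: C_def Diff_Diff_Int Int_absorb1)
  define S where "S = {x \<in> topspace T. \<forall>i\<in>I. x \<in> C i}"
  have "topspace T - S = (\<Union>i\<in>I. topspace T - C i)"
    unfolding S_def by blast
  then have comeager: "comeager_in T S"
    unfolding comeager_in_def S_def using meager_in_UN[OF assms(1) C_meager] by auto
  have C_iff: "y \<in> C i \<longleftrightarrow> (x \<in> P i \<longleftrightarrow> y \<in> P i)" if "x \<in> C i" "y \<in> topspace T" for i x y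
    using that unfolding C_def by auto
  have same_class: "(\<forall>i\<in>I. x \<in> P i \<longleftrightarrow> y \<in> P i) \<longleftrightarrow> y \<in> S" if "x \<in> S" "y \<in> topspace T" for x y
  proof -
    have "y \<in> C i \<longleftrightarrow> (x \<in> P i \<longleftrightarrow> y \<in> P i)" if "i \<in> I" for i
      using C_iff \<open>x \<in> S\<close> \<open>y \<in> topspace T\<close> that unfolding S_def by blast
    then show ?thesis
      using \<open>y \<in> topspace T\<close> unfolding S_def by simp
  qed
  show ?thesis
    using comeager same_class by blast
qed

section \<open>The space of group tables\<close>

lemma mem_Npos_iff [simp]: "n \<in> Npos \<longleftrightarrow> 0 < n"
  unfolding Npos_def by auto

lemma topspace_table_space: "topspace table_space = (\<Pi>\<^sub>E d\<in>Npos \<times> Npos. Npos)"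
  unfolding table_space_def by simp

lemma topspace_group_space: "topspace group_space = group_tables"
  unfolding group_space_def group_tables_def is_group_table_def by auto

lemma group_table_PiE: "A \<in> group_tables \<Longrightarrow> A \<in> (\<Pi>\<^sub>E d\<in>Npos \<times> Npos. Npos)"
  unfolding group_tables_def is_group_table_def topspace_table_space by blast

lemma group_table_closed: "A \<in> group_tables \<Longrightarrow> a \<in> Npos \<Longrightarrow> b \<in> Npos \<Longrightarrow> A (a, b) \<in> Npos"
  using group_table_PiE by (metis PiE_mem mem_Sigma_iff)

lemma group_table_undefined: "A \<in> group_tables \<Longrightarrow> d \<notin> Npos \<times> Npos \<Longrightarrow> A d = undefined"
  using group_table_PiE by (metis PiE_arb)

lemma group_table_assoc:
  "A \<in> group_tables \<Longrightarrow> a \<in> Npos \<Longrightarrow> b \<in> Npos \<Longrightarrow> c \<in> Npos \<Longrightarrow> A (A (a, b), c) = A (a, A (b, c))"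
  unfolding group_tables_def is_group_table_def by blast

lemma group_table_one:
  "A \<in> group_tables \<Longrightarrow> a \<in> Npos \<Longrightarrow> A (1, a) = a"
  "A \<in> group_tables \<Longrightarrow> a \<in> Npos \<Longrightarrow> A (a, 1) = a"
  unfolding group_tables_def is_group_table_def by blast+

lemma group_table_inverse:
  "A \<in> group_tables \<Longrightarrow> a \<in> Npos \<Longrightarrow> \<exists>b\<in>Npos. A (a, b) = 1 \<and> A (b, a) = 1"
  unfolding group_tables_def is_group_table_def by blast

definition cylinder :: "(nat \<times> nat) set \<Rightarrow> (nat \<times> nat \<Rightarrow> nat) \<Rightarrow> (nat \<times> nat \<Rightarrow> nat) set" where
  "cylinder D A = {B \<in> group_tables. \<forall>d\<in>D. B d = A d}"

lemma cylinder_self: "A \<in> group_tables \<Longrightarrow> A \<in> cylinder D A"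
  unfolding cylinder_def by simp

lemma cylinder_mono: "D \<subseteq> D' \<Longrightarrow> cylinder D' A \<subseteq> cylinder D A"
  unfolding cylinder_def by auto

lemma cylinder_Int_Npos_Npos:
  assumes "A \<in> group_tables"
  shows "cylinder (D \<inter> Npos \<times> Npos) A = cylinder D A"
proof -
  have "B d = A d" if "B \<in> group_tables" "d \<notin> Npos \<times> Npos" for B d
    using that assms group_table_undefined by metis
  then show ?thesis
    unfolding cylinder_def by auto
qed

lemma openin_cylinder:
  assumes "finite D" and A: "A \<in> group_tables"
  shows "openin group_space (cylinder D A)"
proof -
  define U where "U d = (if d \<in> D then {A d} else Npos)" for d
  have "finite {d \<in> Npos \<times> Npos. U d \<noteq> Npos}"
    by (rule finite_subset[OF _ \<open>finite D\<close>]) (auto simp: U_def)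
  moreover have "U d \<subseteq> Npos" if "d \<in> Npos \<times> Npos" for d
    using that group_table_closed[OF A] by (auto simp: U_def)
  ultimately have "openin table_space (\<Pi>\<^sub>E d\<in>Npos \<times> Npos. U d)"
    by (simp add: table_space_def openin_PiE_gen)
  moreover have "cylinder (D \<inter> Npos \<times> Npos) A = (\<Pi>\<^sub>E d\<in>Npos \<times> Npos. U d) \<inter> group_tables"
  proof (intro equalityI subsetI)
    fix B assume "B \<in> cylinder (D \<inter> Npos \<times> Npos) A"
    then have "B \<in> group_tables" and cylinder_B: "\<And>d. d \<in> D \<inter> Npos \<times> Npos \<Longrightarrow> B d = A d"
      unfolding cylinder_def by auto
    moreover have "B \<in> (\<Pi>\<^sub>E d\<in>Npos \<times> Npos. U d)"
    proof (rule PiE_I)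
      show "B d \<in> U d" if "d \<in> Npos \<times> Npos" for d
        using that \<open>B \<in> group_tables\<close> group_table_closed cylinder_B by (force simp: U_def)
      show "B d = undefined" if "d \<notin> Npos \<times> Npos" for d
        using \<open>B \<in> group_tables\<close> that by (rule group_table_undefined)
    qed
    ultimately show "B \<in> (\<Pi>\<^sub>E d\<in>Npos \<times> Npos. U d) \<inter> group_tables"
      by blast
  next
    fix B assume "B \<in> (\<Pi>\<^sub>E d\<in>Npos \<times> Npos. U d) \<inter> group_tables"
    then show "B \<in> cylinder (D \<inter> Npos \<times> Npos) A"
      unfolding cylinder_def PiE_iff U_def by (auto split: if_splits)
  qed
  ultimately show ?thesis
    unfolding group_space_def openin_subtopology cylinder_Int_Npos_Npos[OF A]
    by (intro exI[of _ "\<Pi>\<^sub>E d\<in>Npos \<times> Npos. U d"]) simp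
qed

lemma cylinder_subset_openin_table_space:
  assumes T: "openin table_space T" and A: "A \<in> T" "A \<in> group_tables"
  shows "\<exists>D. finite D \<and> D \<subseteq> Npos \<times> Npos \<and> cylinder D A \<subseteq> T"
proof -
  obtain U where U: "finite {d \<in> Npos \<times> Npos. U d \<noteq> Npos}"
    "A \<in> (\<Pi>\<^sub>E d\<in>Npos \<times> Npos. U d)" "(\<Pi>\<^sub>E d\<in>Npos \<times> Npos. U d) \<subseteq> T"
    using T A unfolding table_space_def openin_product_topology_alt by auto
  define D where "D = {d \<in> Npos \<times> Npos. U d \<noteq> Npos}"
  have "B \<in> (\<Pi>\<^sub>E d\<in>Npos \<times> Npos. U d)" if "B \<in> cylinder D A" for B
  proof (rule PiE_I)
    have B: "B \<in> group_tables" "\<And>d. d \<in> D \<Longrightarrow> B d = A d"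
      using that unfolding cylinder_def by auto
    show "B d \<in> U d" if "d \<in> Npos \<times> Npos" for d
    proof (cases "d \<in> D")
      case True
      then show ?thesis using B(2) U(2) that by (auto simp: PiE_iff)
    next
      case False
      then show ?thesis using that group_table_closed[OF B(1)] by (auto simp: D_def)
    qed
    show "B d = undefined" if "d \<notin> Npos \<times> Npos" for d
      using B(1) that by (rule group_table_undefined)
  qed
  then have "cylinder D A \<subseteq> T"
    using U(3) by (intro subsetI) (rule subsetD)
  then show ?thesis
    using U(1) by (intro exI[of _ D]) (auto simp: D_def)
qed

lemma openin_group_space_iff:
  "openin group_space V \<longleftrightarrow>
     V \<subseteq> group_tables \<and> (\<forall>A\<in>V. \<exists>D. finite D \<and> D \<subseteq> Npos \<times> Npos \<and> cylinder D A \<subseteq> V)"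
proof
  assume "openin group_space V"
  then obtain T where T: "openin table_space T" and V: "V = T \<inter> group_tables"
    unfolding group_space_def openin_subtopology by auto
  have "\<exists>D. finite D \<and> D \<subseteq> Npos \<times> Npos \<and> cylinder D A \<subseteq> V" if "A \<in> V" for A
  proof -
    have "A \<in> T" "A \<in> group_tables"
      using that V by auto
    then have "\<exists>D. finite D \<and> D \<subseteq> Npos \<times> Npos \<and> cylinder D A \<subseteq> T"
      by (rule cylinder_subset_openin_table_space[OF T])
    then obtain D where D: "finite D" "D \<subseteq> Npos \<times> Npos" "cylinder D A \<subseteq> T"
      by (elim exE conjE)
    have "cylinder D A \<subseteq> group_tables"
      unfolding cylinder_def by auto
    with D(3) have "cylinder D A \<subseteq> V"
      unfolding V by (rule Int_greatest)
    with D(1,2) show ?thesis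
      by (intro exI[of _ D] conjI)
  qed
  then show "V \<subseteq> group_tables \<and> (\<forall>A\<in>V. \<exists>D. finite D \<and> D \<subseteq> Npos \<times> Npos \<and> cylinder D A \<subseteq> V)"
    using V by auto
next
  assume R: "V \<subseteq> group_tables \<and> (\<forall>A\<in>V. \<exists>D. finite D \<and> D \<subseteq> Npos \<times> Npos \<and> cylinder D A \<subseteq> V)"
  then obtain D where D: "\<And>A. A \<in> V \<Longrightarrow> finite (D A) \<and> cylinder (D A) A \<subseteq> V"
    by metis
  have "V = (\<Union>A\<in>V. cylinder (D A) A)"
  proof (intro equalityI subsetI)
    fix A assume "A \<in> V"
    then show "A \<in> (\<Union>A\<in>V. cylinder (D A) A)"
      using R cylinder_self by auto
  qed (use D in auto)
  moreover have "openin group_space (\<Union>A\<in>V. cylinder (D A) A)"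
    using D R by (intro openin_Union) (auto intro: openin_cylinder)
  ultimately show "openin group_space V"
    by simp
qed

lemma second_countable_group_space: "second_countable group_space"
  unfolding second_countable_def
proof (intro exI conjI allI impI ballI)
  let ?\<B> = "{cylinder D A | D A. finite D \<and> A \<in> group_tables}"
  let ?graph_cylinder = "\<lambda>q. {B \<in> group_tables. \<forall>(d, v)\<in>q. B d = v}"
  have "cylinder D A \<in> ?graph_cylinder ` {q. finite q}" if "finite D" for D A
    by (rule image_eqI[of _ _ "(\<lambda>d. (d, A d)) ` D"]) (use that in \<open>auto simp: cylinder_def\<close>)
  then have "?\<B> \<subseteq> ?graph_cylinder ` {q. finite q}"
    by auto
  then show "countable ?\<B>"
    by (rule countable_subset) (intro countable_image countable_Collect_finite)
  show "openin group_space V" if "V \<in> ?\<B>" for V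
    using that openin_cylinder by auto
  fix U A
  assume "openin group_space U \<and> A \<in> U"
  then have "A \<in> group_tables" "\<exists>D. finite D \<and> D \<subseteq> Npos \<times> Npos \<and> cylinder D A \<subseteq> U"
    unfolding openin_group_space_iff by auto
  then obtain D where "finite D" "cylinder D A \<subseteq> U" "A \<in> group_tables"
    by auto
  then show "\<exists>V\<in>?\<B>. A \<in> V \<and> V \<subseteq> U"
    using cylinder_self by auto
qed

section \<open>Relabelling the elements of a group table\<close>

definition relabelling :: "(nat \<Rightarrow> nat) \<Rightarrow> bool" where
  "relabelling s \<longleftrightarrow> s permutes Npos \<and> s 1 = 1"

definition relabel :: "(nat \<Rightarrow> nat) \<Rightarrow> (nat \<times> nat \<Rightarrow> nat) \<Rightarrow> (nat \<times> nat \<Rightarrow> nat)" where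
  "relabel s A = (\<lambda>(i, j). if i \<in> Npos \<and> j \<in> Npos then inv s (A (s i, s j)) else undefined)"

lemma relabelling_inv:
  assumes "relabelling s"
  shows "relabelling (inv s)"
proof -
  have s: "s permutes Npos" "s 1 = 1"
    using assms unfolding relabelling_def by auto
  then have "inv s 1 = 1"
    using permutes_inverses(2)[OF s(1), of 1] by simp
  then show ?thesis
    using permutes_inv[OF s(1)] unfolding relabelling_def by simp
qed

lemma relabelling_inv_inv: "relabelling s \<Longrightarrow> inv (inv s) = s"
  unfolding relabelling_def by (elim conjE) (rule permutes_inv_inv)

lemma relabelling_pos_iff [simp]: "relabelling s \<Longrightarrow> 0 < s n \<longleftrightarrow> 0 < n"
  using permutes_in_image[of s Npos n] unfolding relabelling_def by simp

lemma relabelling_inverses [simp]: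
  "relabelling s \<Longrightarrow> s (inv s n) = n"
  "relabelling s \<Longrightarrow> inv s (s n) = n"
  unfolding relabelling_def by (elim conjE, erule permutes_inverses)+

lemma relabel_apply [simp]:
  "i \<in> Npos \<Longrightarrow> j \<in> Npos \<Longrightarrow> relabel s A (i, j) = inv s (A (s i, s j))"
  unfolding relabel_def by simp

lemma relabel_group_table:
  assumes s: "relabelling s" and A: "A \<in> group_tables"
  shows "relabel s A \<in> group_tables"
proof -
  have s1: "s 1 = 1" "inv s 1 = 1"
    using s relabelling_inv unfolding relabelling_def by blast+
  have closed: "relabel s A (a, b) \<in> Npos" if "a \<in> Npos" "b \<in> Npos" for a b
    using that s group_table_closed[OF A] relabelling_inv[OF s] by simp
  have "relabel s A \<in> topspace table_space"
    unfolding topspace_table_space using closed by (auto simp: PiE_iff extensional_def relabel_def)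
  moreover have "relabel s A (relabel s A (a, b), c) = relabel s A (a, relabel s A (b, c))"
    if "a \<in> Npos" "b \<in> Npos" "c \<in> Npos" for a b c
    using that s closed group_table_closed[OF A] by (simp add: group_table_assoc[OF A])
  moreover have "relabel s A (1, a) = a \<and> relabel s A (a, 1) = a" if "a \<in> Npos" for a
  proof -
    have "s a \<in> Npos"
      using that s by simp
    then have "A (1, s a) = s a" "A (s a, 1) = s a"
      using group_table_one[OF A] by blast+
    then show ?thesis
      using that s s1 by simp
  qed
  moreover have "\<exists>b\<in>Npos. relabel s A (a, b) = 1 \<and> relabel s A (b, a) = 1" if "a \<in> Npos" for a
  proof -
    have "s a \<in> Npos"
      using that s by simp
    then obtain b where "b \<in> Npos" "A (s a, b) = 1" "A (b, s a) = 1"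
      using group_table_inverse[OF A] by blast
    then show ?thesis
      using that s s1 relabelling_inv[OF s] by (intro bexI[of _ "inv s b"]) simp_all
  qed
  ultimately show ?thesis
    unfolding group_tables_def is_group_table_def by blast
qed

lemma relabel_inv_relabel:
  assumes s: "relabelling s" and A: "A \<in> group_tables"
  shows "relabel (inv s) (relabel s A) = A"
proof
  fix d :: "nat \<times> nat"
  show "relabel (inv s) (relabel s A) d = A d"
    using s relabelling_inv[OF s] group_table_undefined[OF A, of d]
    by (cases d) (auto simp: relabelling_inv_inv relabel_def)
qed

lemma continuous_map_relabel:
  assumes s: "relabelling s"
  shows "continuous_map group_space group_space (relabel s)"
  unfolding continuous_map_def topspace_group_space
proof (intro conjI allI impI Pi_I)
  show "relabel s A \<in> group_tables" if "A \<in> group_tables" for A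
    using s that by (rule relabel_group_table)
  fix V assume "openin group_space V"
  then have V: "V \<subseteq> group_tables" "\<And>A. A \<in> V \<Longrightarrow> \<exists>D. finite D \<and> D \<subseteq> Npos \<times> Npos \<and> cylinder D A \<subseteq> V"
    unfolding openin_group_space_iff by auto
  have "\<exists>D. finite D \<and> D \<subseteq> Npos \<times> Npos \<and> cylinder D A \<subseteq> {A \<in> group_tables. relabel s A \<in> V}"
    if A: "A \<in> group_tables" "relabel s A \<in> V" for A
  proof -
    obtain D where D: "finite D" "D \<subseteq> Npos \<times> Npos" "cylinder D (relabel s A) \<subseteq> V"
      using V(2)[OF A(2)] by blast
    let ?D = "map_prod s s ` D"
    have "relabel s B \<in> cylinder D (relabel s A)" if B: "B \<in> cylinder ?D A" for B
    proof -
      have "relabel s B (i, j) = relabel s A (i, j)" if "(i, j) \<in> D" for i j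
      proof -
        have "B (s i, s j) = A (s i, s j)"
          using B that unfolding cylinder_def by force
        moreover have "i \<in> Npos" "j \<in> Npos"
          using D(2) that by auto
        ultimately show ?thesis
          by simp
      qed
      then show ?thesis
        using B relabel_group_table[OF s] unfolding cylinder_def by auto
    qed
    then have "cylinder ?D A \<subseteq> {A \<in> group_tables. relabel s A \<in> V}"
      using D(3) unfolding cylinder_def by blast
    moreover have "?D \<subseteq> Npos \<times> Npos"
      using D(2) s by auto
    ultimately show ?thesis
      using D(1) by (intro exI[of _ ?D]) auto
  qed
  then show "openin group_space {A \<in> group_tables. relabel s A \<in> V}"
    unfolding openin_group_space_iff by auto
qed

lemma homeomorphic_map_relabel:
  assumes s: "relabelling s"
  shows "homeomorphic_map group_space group_space (relabel s)"
proof -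
  have "homeomorphic_maps group_space group_space (relabel s) (relabel (inv s))"
    unfolding homeomorphic_maps_def topspace_group_space
    using s relabelling_inv[OF s] relabel_inv_relabel[OF s] relabel_inv_relabel[OF relabelling_inv[OF s]]
    by (simp add: continuous_map_relabel relabelling_inv_inv)
  then show ?thesis
    using homeomorphic_map_maps by blast
qed

lemma relabelling_bex:
  assumes s: "relabelling s"
  shows "(\<exists>a\<in>Npos. P (s a)) \<longleftrightarrow> (\<exists>b\<in>Npos. P b)"
proof
  assume "\<exists>b\<in>Npos. P b"
  then obtain b where "b \<in> Npos" "P b"
    by blast
  then show "\<exists>a\<in>Npos. P (s a)"
    using s relabelling_inv[OF s] by (intro bexI[of _ "inv s b"]) simp_all
qed (use s in auto)

lemma relabelling_ball:
  assumes "relabelling s"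
  shows "(\<forall>a\<in>Npos. P (s a)) \<longleftrightarrow> (\<forall>b\<in>Npos. P b)"
  using relabelling_bex[OF assms, of "\<lambda>b. \<not> P b"] by blast

lemma teval_in_Npos:
  assumes "A \<in> group_tables" and "\<And>x. e x \<in> Npos"
  shows "teval A e t \<in> Npos"
  by (induction t) (use assms group_table_closed in simp_all)

lemma teval_relabel:
  assumes s: "relabelling s" and A: "A \<in> group_tables" and e: "\<And>x. e x \<in> Npos"
  shows "teval (relabel s A) e t = inv s (teval A (s \<circ> e) t)"
proof (induction t)
  case (GMul t1 t2)
  have "teval A (s \<circ> e) t1 \<in> Npos" "teval A (s \<circ> e) t2 \<in> Npos"
    using e s by (intro teval_in_Npos[OF A]; simp)+
  then show ?case
    using GMul s relabelling_inv[OF s] by (simp add: comp_def)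
qed (use s e relabelling_inv[OF s] in \<open>simp_all add: relabelling_def\<close>)

lemma sat_relabel:
  assumes s: "relabelling s" and A: "A \<in> group_tables"
  shows "(\<And>x. e x \<in> Npos) \<Longrightarrow> sat (relabel s A) e p \<longleftrightarrow> sat A (s \<circ> e) p"
proof (induction p arbitrary: e)
  case (GEq t1 t2)
  have "inj (inv s)"
    using relabelling_inv[OF s] unfolding relabelling_def by (auto intro: permutes_inj)
  then show ?case
    using GEq by (simp add: teval_relabel[OF s A] inj_eq comp_def)
next
  case (GEx x p)
  have "sat (relabel s A) (e(x := a)) p \<longleftrightarrow> sat A ((s \<circ> e)(x := s a)) p" if "a \<in> Npos" for a
  proof -
    have "\<And>y. (e(x := a)) y \<in> Npos"
      using GEx.prems that by simp
    then show ?thesis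
      unfolding fun_upd_comp[symmetric] by (rule GEx.IH)
  qed
  then have "sat (relabel s A) e (GEx x p) \<longleftrightarrow> (\<exists>a\<in>Npos. sat A ((s \<circ> e)(x := s a)) p)"
    unfolding sat.simps by (rule bex_cong[OF refl])
  also have "\<dots> \<longleftrightarrow> sat A (s \<circ> e) (GEx x p)"
    unfolding sat.simps by (rule relabelling_bex[OF s])
  finally show ?case .
next
  case (GAll x p)
  have "sat (relabel s A) (e(x := a)) p \<longleftrightarrow> sat A ((s \<circ> e)(x := s a)) p" if "a \<in> Npos" for a
  proof -
    have "\<And>y. (e(x := a)) y \<in> Npos"
      using GAll.prems that by simp
    then show ?thesis
      unfolding fun_upd_comp[symmetric] by (rule GAll.IH)
  qed
  then have "sat (relabel s A) e (GAll x p) \<longleftrightarrow> (\<forall>a\<in>Npos. sat A ((s \<circ> e)(x := s a)) p)"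
    unfolding sat.simps by (rule ball_cong[OF refl])
  also have "\<dots> \<longleftrightarrow> sat A (s \<circ> e) (GAll x p)"
    unfolding sat.simps by (rule relabelling_ball[OF s])
  finally show ?case .
qed simp_all

lemma models_relabel:
  assumes "relabelling s" and "A \<in> group_tables"
  shows "models (relabel s A) p \<longleftrightarrow> models A p"
  using sat_relabel[OF assms, of "\<lambda>_. 1" p] assms(1)
  unfolding models_def relabelling_def by (simp add: comp_def)

section \<open>Definable sets of group tables have the Baire property\<close>

lemma teval_cylinder: "\<exists>D. finite D \<and> (\<forall>B\<in>cylinder D A. teval B e t = teval A e t)"
proof (induction t)
  case (GMul t1 t2)
  obtain D1 where D1: "finite D1" "\<forall>B\<in>cylinder D1 A. teval B e t1 = teval A e t1"
    using GMul.IH(1) by blast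
  obtain D2 where D2: "finite D2" "\<forall>B\<in>cylinder D2 A. teval B e t2 = teval A e t2"
    using GMul.IH(2) by blast
  define D where "D = insert (teval A e t1, teval A e t2) (D1 \<union> D2)"
  have "teval B e (GMul t1 t2) = teval A e (GMul t1 t2)" if B: "B \<in> cylinder D A" for B
  proof -
    have "B \<in> cylinder D1 A" "B \<in> cylinder D2 A"
      using B cylinder_mono[of D1 D A] cylinder_mono[of D2 D A] unfolding D_def by auto
    moreover have "B (teval A e t1, teval A e t2) = A (teval A e t1, teval A e t2)"
      using B unfolding cylinder_def D_def by simp
    ultimately show ?thesis
      using D1(2) D2(2) by simp
  qed
  then show ?case
    using D1(1) D2(1) unfolding D_def by (intro exI[of _ D]) (simp add: D_def)
qed (rule exI[of _ "{}"], simp)+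

lemma openin_sat_GEq: "openin group_space {A \<in> group_tables. sat A e (GEq t1 t2)}"
  unfolding openin_group_space_iff
proof (intro conjI ballI)
  fix A assume A: "A \<in> {A \<in> group_tables. sat A e (GEq t1 t2)}"
  obtain D1 where D1: "finite D1" "\<forall>B\<in>cylinder D1 A. teval B e t1 = teval A e t1"
    using teval_cylinder by blast
  obtain D2 where D2: "finite D2" "\<forall>B\<in>cylinder D2 A. teval B e t2 = teval A e t2"
    using teval_cylinder by blast
  define D where "D = (D1 \<union> D2) \<inter> Npos \<times> Npos"
  have "B \<in> {A \<in> group_tables. sat A e (GEq t1 t2)}" if B: "B \<in> cylinder D A" for B
  proof -
    have "B \<in> cylinder (D1 \<union> D2) A"
      using A B unfolding D_def by (simp add: cylinder_Int_Npos_Npos)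
    then have "B \<in> cylinder D1 A" "B \<in> cylinder D2 A"
      using cylinder_mono[of D1 "D1 \<union> D2" A] cylinder_mono[of D2 "D1 \<union> D2" A] by auto
    then have "teval B e t1 = teval A e t1" "teval B e t2 = teval A e t2"
      using D1(2) D2(2) by simp_all
    moreover have "B \<in> group_tables"
      using B unfolding cylinder_def by simp
    ultimately show ?thesis
      using A by simp
  qed
  moreover have "finite D" "D \<subseteq> Npos \<times> Npos"
    using D1(1) D2(1) unfolding D_def by auto
  ultimately show "\<exists>D. finite D \<and> D \<subseteq> Npos \<times> Npos \<and> cylinder D A \<subseteq> {A \<in> group_tables. sat A e (GEq t1 t2)}"
    by (intro exI[of _ D] conjI) auto
qed auto

lemma baire_property_sat: "baire_property_in group_space {A \<in> group_tables. sat A e p}"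
proof (induction p arbitrary: e)
  case (GEq t1 t2)
  show ?case
    using openin_sat_GEq by (rule baire_property_in_open)
next
  case GFalse
  show ?case
    using baire_property_in_open[OF openin_empty] by simp
next
  case (GNot p)
  have "{A \<in> group_tables. sat A e (GNot p)} = topspace group_space - {A \<in> group_tables. sat A e p}"
    by (auto simp: topspace_group_space)
  then show ?case
    using baire_property_in_complement[OF GNot] by simp
next
  case (GAnd p q)
  have "{A \<in> group_tables. sat A e (GAnd p q)} = {A \<in> group_tables. sat A e p} \<inter> {A \<in> group_tables. sat A e q}"
    by auto
  then show ?case
    using baire_property_in_Int[OF GAnd] by simp
next
  case (GOr p q)
  have "{A \<in> group_tables. sat A e (GOr p q)} = {A \<in> group_tables. sat A e p} \<union> {A \<in> group_tables. sat A e q}"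
    by auto
  then show ?case
    using baire_property_in_Un[OF GOr] by simp
next
  case (GImp p q)
  have "{A \<in> group_tables. sat A e (GImp p q)} =
          (topspace group_space - {A \<in> group_tables. sat A e p}) \<union> {A \<in> group_tables. sat A e q}"
    by (auto simp: topspace_group_space)
  then show ?case
    using baire_property_in_Un[OF baire_property_in_complement[OF GImp(1)] GImp(2)] by simp
next
  case (GEx x p)
  have "{A \<in> group_tables. sat A e (GEx x p)} = (\<Union>a\<in>Npos. {A \<in> group_tables. sat A (e(x := a)) p})"
    by auto
  then show ?case
    using GEx by (simp add: baire_property_in_UN)
next
  case (GAll x p)
  have eq: "{A \<in> group_tables. sat A e (GAll x p)} =
          topspace group_space - (\<Union>a\<in>Npos. topspace group_space - {A \<in> group_tables. sat A (e(x := a)) p})"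
    by (auto simp: topspace_group_space)
  have "baire_property_in group_space (\<Union>a\<in>Npos. topspace group_space - {A \<in> group_tables. sat A (e(x := a)) p})"
    by (intro baire_property_in_UN baire_property_in_complement GAll) simp
  then show ?case
    unfolding eq by (rule baire_property_in_complement)
qed

section \<open>Topological transitivity of relabelling\<close>

lemma extend_inj_on_to_bij_betw:
  assumes A: "countable A" "infinite A" and B: "countable B" "infinite B"
    and F: "finite F" "F \<subseteq> A" and f: "inj_on f F" "f ` F \<subseteq> B"
  shows "\<exists>g. bij_betw g A B \<and> (\<forall>x\<in>F. g x = f x)"
proof -
  have "countable (A - F)" "infinite (A - F)" "countable (B - f ` F)" "infinite (B - f ` F)"
    using A B F by auto
  then obtain a :: "_ \<Rightarrow> nat" and b :: "_ \<Rightarrow> nat"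
    where a: "bij_betw a (A - F) UNIV" and b: "bij_betw b (B - f ` F) UNIV"
    by (metis countableE_infinite)
  define g where "g x = (if x \<in> F then f x else (inv_into (B - f ` F) b \<circ> a) x)" for x
  have "bij_betw g F (f ` F)"
    using f(1) by (simp add: bij_betw_def g_def inj_on_def image_def)
  moreover have "bij_betw g (A - F) (B - f ` F)"
    using bij_betw_trans[OF a bij_betw_inv_into[OF b]] by (rule bij_betw_cong[THEN iffD1, rotated]) (simp add: g_def)
  ultimately have "bij_betw g (F \<union> (A - F)) (f ` F \<union> (B - f ` F))"
    by (rule bij_betw_combine) blast
  moreover have "F \<union> (A - F) = A" "f ` F \<union> (B - f ` F) = B"
    using F f by auto
  ultimately show ?thesis
    by (intro exI[of _ g]) (simp add: g_def)
qed

lemma infinite_Npos: "infinite Npos"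
proof -
  have "Npos = {1..}"
    by auto
  then show ?thesis
    using infinite_Ici[of "1::nat"] by simp
qed

lemma exists_bij_Npos_Npos_Times_Npos:
  assumes "finite L" and "L \<subseteq> Npos"
  shows "\<exists>b. bij_betw b Npos (Npos \<times> Npos) \<and> (\<forall>x\<in>L. b x = (x, 1))"
  using assms infinite_Npos infinite_cartesian_product[OF infinite_Npos infinite_Npos]
  by (intro extend_inj_on_to_bij_betw) (auto simp: inj_on_def)

lemma relabelling_extends:
  assumes "finite L" "L \<subseteq> Npos" "1 \<in> L" and f: "inj_on f L" "f ` L \<subseteq> Npos" "f 1 = 1"
  shows "\<exists>s. relabelling s \<and> (\<forall>x\<in>L. s x = f x)"
proof -
  obtain g where g: "bij_betw g Npos Npos" "\<forall>x\<in>L. g x = f x"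
    using extend_inj_on_to_bij_betw[OF countableI_type infinite_Npos countableI_type infinite_Npos assms(1,2) f(1,2)]
    by blast
  define s where "s x = (if x \<in> Npos then g x else x)" for x
  have "bij_betw s Npos Npos"
    using g(1) by (rule bij_betw_cong[THEN iffD1, rotated]) (simp add: s_def)
  then have "s permutes Npos"
    by (rule bij_imp_permutes) (simp add: s_def)
  moreover have "\<forall>x\<in>L. s x = f x"
    using g(2) assms(2) unfolding s_def by auto
  ultimately show ?thesis
    using assms(3) f(3) unfolding relabelling_def by (intro exI[of _ s]) auto
qed

definition transport_table :: "(nat \<Rightarrow> 'a) \<Rightarrow> ('a \<Rightarrow> 'a \<Rightarrow> 'a) \<Rightarrow> nat \<times> nat \<Rightarrow> nat" where
  "transport_table b m = (\<lambda>(x, y). if x \<in> Npos \<and> y \<in> Npos then inv_into Npos b (m (b x) (b y)) else undefined)"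

lemma transport_table_apply [simp]:
  "x \<in> Npos \<Longrightarrow> y \<in> Npos \<Longrightarrow> transport_table b m (x, y) = inv_into Npos b (m (b x) (b y))"
  unfolding transport_table_def by simp

lemma transport_table_group_table:
  assumes b: "bij_betw b Npos X" and b1: "b 1 = e"
    and closed: "\<And>p q. p \<in> X \<Longrightarrow> q \<in> X \<Longrightarrow> m p q \<in> X"
    and assoc: "\<And>p q r. p \<in> X \<Longrightarrow> q \<in> X \<Longrightarrow> r \<in> X \<Longrightarrow> m (m p q) r = m p (m q r)"
    and unit: "\<And>p. p \<in> X \<Longrightarrow> m e p = p \<and> m p e = p"
    and inverse: "\<And>p. p \<in> X \<Longrightarrow> \<exists>q\<in>X. m p q = e \<and> m q p = e"
  shows "transport_table b m \<in> group_tables"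
proof -
  let ?P = "transport_table b m" and ?b' = "inv_into Npos b"
  have b_in: "b x \<in> X" if "x \<in> Npos" for x
    using b that by (rule bij_betw_apply)
  have b'_in: "?b' p \<in> Npos" if "p \<in> X" for p
    using bij_betw_inv_into[OF b] that by (rule bij_betw_apply)
  have b'_b: "?b' (b x) = x" if "x \<in> Npos" for x
    using b that by (rule bij_betw_inv_into_left)
  have b_b': "b (?b' p) = p" if "p \<in> X" for p
    using b that by (rule bij_betw_inv_into_right)
  have P_closed: "?P (x, y) \<in> Npos" if "x \<in> Npos" "y \<in> Npos" for x y
    using b'_in[OF closed[OF b_in[OF that(1)] b_in[OF that(2)]]] that by simp
  have "?P \<in> topspace table_space"
    unfolding topspace_table_space
  proof (rule PiE_I)
    fix d :: "nat \<times> nat"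
    show "?P d \<in> Npos" if "d \<in> Npos \<times> Npos"
      using that P_closed by (cases d) simp
    show "?P d = undefined" if "d \<notin> Npos \<times> Npos"
      using that by (cases d) (auto simp: transport_table_def)
  qed
  moreover have "?P (?P (x, y), z) = ?P (x, ?P (y, z))" if "x \<in> Npos" "y \<in> Npos" "z \<in> Npos" for x y z
    using that P_closed b_in closed b_b' by (simp add: assoc)
  moreover have "?P (1, x) = x \<and> ?P (x, 1) = x" if "x \<in> Npos" for x
    using that b1 b_in unit b'_b by simp
  moreover have "\<exists>y\<in>Npos. ?P (x, y) = 1 \<and> ?P (y, x) = 1" if x: "x \<in> Npos" for x
  proof -
    obtain q where "q \<in> X" "m (b x) q = e" "m q (b x) = e"
      using inverse[OF b_in[OF x]] by blast
    moreover have "?b' e = 1"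
      using b'_b[of 1] b1 by simp
    ultimately show ?thesis
      using x b'_in b_b' by (intro bexI[of _ "?b' q"]) simp_all
  qed
  ultimately show ?thesis
    unfolding group_tables_def is_group_table_def by blast
qed

definition product_mult :: "(nat \<times> nat \<Rightarrow> nat) \<Rightarrow> (nat \<times> nat \<Rightarrow> nat) \<Rightarrow> nat \<times> nat \<Rightarrow> nat \<times> nat \<Rightarrow> nat \<times> nat" where
  "product_mult G H p q = (G (fst p, fst q), H (snd p, snd q))"

lemma transport_product_group_table:
  assumes G: "G \<in> group_tables" and H: "H \<in> group_tables"
    and b: "bij_betw b Npos (Npos \<times> Npos)" and b1: "b 1 = (1, 1)"
  shows "transport_table b (product_mult G H) \<in> group_tables"
proof (rule transport_table_group_table[OF b b1])
  fix p q r :: "nat \<times> nat"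
  assume p: "p \<in> Npos \<times> Npos" and q: "q \<in> Npos \<times> Npos" and r: "r \<in> Npos \<times> Npos"
  show "product_mult G H p q \<in> Npos \<times> Npos"
    using p q group_table_closed[OF G] group_table_closed[OF H] by (auto simp: product_mult_def)
  show "product_mult G H (product_mult G H p q) r = product_mult G H p (product_mult G H q r)"
    using p q r group_table_assoc[OF G] group_table_assoc[OF H] by (auto simp: product_mult_def)
next
  fix p :: "nat \<times> nat"
  assume p: "p \<in> Npos \<times> Npos"
  show "product_mult G H (1, 1) p = p \<and> product_mult G H p (1, 1) = p"
    using p group_table_one[OF G] group_table_one[OF H] by (auto simp: product_mult_def)
  obtain g where "g \<in> Npos" "G (fst p, g) = 1" "G (g, fst p) = 1"
    using p group_table_inverse[OF G, of "fst p"] by auto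
  moreover obtain h where "h \<in> Npos" "H (snd p, h) = 1" "H (h, snd p) = 1"
    using p group_table_inverse[OF H, of "snd p"] by auto
  ultimately show "\<exists>q\<in>Npos \<times> Npos. product_mult G H p q = (1, 1) \<and> product_mult G H q p = (1, 1)"
    by (intro bexI[of _ "(g, h)"]) (simp_all add: product_mult_def)
qed

definition cylinder_labels :: "(nat \<times> nat) set \<Rightarrow> (nat \<times> nat \<Rightarrow> nat) \<Rightarrow> nat set" where
  "cylinder_labels D A = insert 1 (fst ` D \<union> snd ` D \<union> A ` D)"

lemma cylinder_labels_finite_subset:
  assumes "A \<in> group_tables" and "finite D" "D \<subseteq> Npos \<times> Npos"
  shows "finite (cylinder_labels D A)" "cylinder_labels D A \<subseteq> Npos"
proof -
  have "A d \<in> Npos" if "d \<in> D" for d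
    using group_table_closed[OF assms(1)] assms(3) that by (cases d) auto
  then show "finite (cylinder_labels D A)" "cylinder_labels D A \<subseteq> Npos"
    using assms(2,3) unfolding cylinder_labels_def by auto
qed

lemma one_in_cylinder_labels: "1 \<in> cylinder_labels D A"
  unfolding cylinder_labels_def by simp

lemma cylinder_labels_mem:
  "(i, j) \<in> D \<Longrightarrow> i \<in> cylinder_labels D A \<and> j \<in> cylinder_labels D A \<and> A (i, j) \<in> cylinder_labels D A"
  unfolding cylinder_labels_def by force

lemma transport_product_in_cylinder_left:
  assumes G: "G \<in> group_tables" and H: "H \<in> group_tables" and "D \<subseteq> Npos \<times> Npos"
    and b: "bij_betw b Npos (Npos \<times> Npos)" and b_labels: "\<And>x. x \<in> cylinder_labels D G \<Longrightarrow> b x = (x, 1)"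
  shows "transport_table b (product_mult G H) \<in> cylinder D G"
proof -
  have b1: "b 1 = (1, 1)"
    using b_labels[of 1] unfolding cylinder_labels_def by simp
  have "transport_table b (product_mult G H) (i, j) = G (i, j)" if "(i, j) \<in> D" for i j
  proof -
    have "i \<in> Npos" "j \<in> Npos"
      using that \<open>D \<subseteq> Npos \<times> Npos\<close> by auto
    then show ?thesis
      using cylinder_labels_mem[OF that] bij_betw_inv_into_left[OF b, of "G (i, j)"]
        group_table_one[OF H] group_table_closed[OF G]
      by (simp add: b_labels product_mult_def)
  qed
  then show ?thesis
    using transport_product_group_table[OF G H b b1] unfolding cylinder_def by auto
qed

lemma relabel_transport_product_in_cylinder_right:
  assumes G: "G \<in> group_tables" and H: "H \<in> group_tables" and "E \<subseteq> Npos \<times> Npos"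
    and b: "bij_betw b Npos (Npos \<times> Npos)" "b 1 = (1, 1)" and s: "relabelling s"
    and s_labels: "\<And>x. x \<in> cylinder_labels E H \<Longrightarrow> s x = inv_into Npos b (1, x)"
  shows "relabel s (transport_table b (product_mult G H)) \<in> cylinder E H"
proof -
  let ?P = "transport_table b (product_mult G H)"
  have "relabel s ?P (i, j) = H (i, j)" if "(i, j) \<in> E" for i j
  proof -
    have ij: "i \<in> Npos" "j \<in> Npos"
      using that \<open>E \<subseteq> Npos \<times> Npos\<close> by auto
    moreover have "s i \<in> Npos" "s j \<in> Npos"
      using ij s by simp_all
    moreover have "b (s i) = (1, i)" "b (s j) = (1, j)"
      using ij cylinder_labels_mem[OF that] bij_betw_inv_into_right[OF b(1)] s_labels by simp_all
    ultimately have "?P (s i, s j) = s (H (i, j))"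
      using s group_table_one[OF G] cylinder_labels_mem[OF that] s_labels by (simp add: product_mult_def)
    then show ?thesis
      using s ij by simp
  qed
  then show ?thesis
    using relabel_group_table[OF s transport_product_group_table[OF G H b]] unfolding cylinder_def by auto
qed

lemma relabelling_into_second_factor:
  assumes b: "bij_betw b Npos (Npos \<times> Npos)" "b 1 = (1, 1)" and L: "finite L" "L \<subseteq> Npos" "1 \<in> L"
  shows "\<exists>s. relabelling s \<and> (\<forall>x\<in>L. s x = inv_into Npos b (1, x))"
proof (rule relabelling_extends)
  show "inj_on (\<lambda>x. inv_into Npos b (1, x)) L"
  proof (rule inj_onI)
    fix x y assume "x \<in> L" "y \<in> L" and eq: "inv_into Npos b (1, x) = inv_into Npos b (1, y)"
    then have "x \<in> Npos" "y \<in> Npos"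
      using L(2) by auto
    then have "(1, x) = b (inv_into Npos b (1, x))"
      using bij_betw_inv_into_right[OF b(1), of "(1, x)"] by simp
    also have "\<dots> = (1, y)"
      unfolding eq using bij_betw_inv_into_right[OF b(1), of "(1, y)"] \<open>y \<in> Npos\<close> by simp
    finally show "x = y"
      by simp
  qed
  show "(\<lambda>x. inv_into Npos b (1, x)) ` L \<subseteq> Npos"
    using L(2) bij_betw_apply[OF bij_betw_inv_into[OF b(1)]] by auto
  show "inv_into Npos b (1, 1) = 1"
    using bij_betw_inv_into_left[OF b(1), of 1] b(2) by simp
qed (use L in auto)

(* G sits inside G x H as the pairs (x, 1) and H as the pairs (1, y); the coding b and the
   relabelling s move these two copies onto the labels of the two cylinders. *)
lemma relabel_transport_product_in_cylinders:
  assumes G: "G \<in> group_tables" and H: "H \<in> group_tables"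
    and D: "finite D" "D \<subseteq> Npos \<times> Npos" and E: "finite E" "E \<subseteq> Npos \<times> Npos"
  shows "\<exists>s P. relabelling s \<and> P \<in> cylinder D G \<and> relabel s P \<in> cylinder E H"
proof -
  obtain b where b: "bij_betw b Npos (Npos \<times> Npos)"
    and b_labels: "\<And>x. x \<in> cylinder_labels D G \<Longrightarrow> b x = (x, 1)"
    using exists_bij_Npos_Npos_Times_Npos[OF cylinder_labels_finite_subset[OF G D]] by blast
  have b1: "b 1 = (1, 1)"
    using b_labels[of 1] unfolding cylinder_labels_def by simp
  obtain s where s: "relabelling s"
    and s_labels: "\<And>x. x \<in> cylinder_labels E H \<Longrightarrow> s x = inv_into Npos b (1, x)"
    using relabelling_into_second_factor[OF b b1 cylinder_labels_finite_subset[OF H E] one_in_cylinder_labels] by blast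
  show ?thesis
    using transport_product_in_cylinder_left[OF G H D(2) b b_labels]
      relabel_transport_product_in_cylinder_right[OF G H E(2) b b1 s s_labels] s
    by blast
qed

lemma relabel_image_meets_open:
  assumes U: "openin group_space U" "U \<noteq> {}" and V: "openin group_space V" "V \<noteq> {}"
  shows "\<exists>s. relabelling s \<and> relabel s ` U \<inter> V \<noteq> {}"
proof -
  have U_cyl: "\<And>A. A \<in> U \<Longrightarrow> A \<in> group_tables \<and> (\<exists>D. finite D \<and> D \<subseteq> Npos \<times> Npos \<and> cylinder D A \<subseteq> U)"
    using U(1) unfolding openin_group_space_iff by auto
  have V_cyl: "\<And>A. A \<in> V \<Longrightarrow> A \<in> group_tables \<and> (\<exists>D. finite D \<and> D \<subseteq> Npos \<times> Npos \<and> cylinder D A \<subseteq> V)"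
    using V(1) unfolding openin_group_space_iff by auto
  obtain G H where "G \<in> U" "H \<in> V"
    using U(2) V(2) by blast
  then obtain D E where G: "G \<in> group_tables" "finite D" "D \<subseteq> Npos \<times> Npos" "cylinder D G \<subseteq> U"
    and H: "H \<in> group_tables" "finite E" "E \<subseteq> Npos \<times> Npos" "cylinder E H \<subseteq> V"
    using U_cyl V_cyl by meson
  obtain s P where s: "relabelling s" and P: "P \<in> cylinder D G" "relabel s P \<in> cylinder E H"
    using relabel_transport_product_in_cylinders[OF G(1) H(1) G(2,3) H(2,3)] by blast
  have "relabel s P \<in> relabel s ` U"
    using P(1) G(4) by (intro imageI) (rule subsetD)
  moreover have "relabel s P \<in> V"
    using P(2) H(4) by (rule rev_subsetD)
  ultimately show ?thesis
    using s by (intro exI[of _ s]) auto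
qed

section \<open>Elementary equivalence classes\<close>

instance gterm :: countable
  by countable_datatype

instance gform :: countable
  by countable_datatype

lemma models_meager_or_comeager:
  "meager_in group_space {A \<in> group_tables. models A p} \<or>
   meager_in group_space (topspace group_space - {A \<in> group_tables. models A p})"
proof (rule topological_zero_one_law[where F = "relabel ` Collect relabelling"])
  show "second_countable group_space"
    by (rule second_countable_group_space)
  show "baire_property_in group_space {A \<in> group_tables. models A p}"
    unfolding models_def by (rule baire_property_sat)
  show "homeomorphic_map group_space group_space f" if "f \<in> relabel ` Collect relabelling" for f
    using that homeomorphic_map_relabel by blast
  show "f A \<in> {A \<in> group_tables. models A p}"
    if "f \<in> relabel ` Collect relabelling" "A \<in> {A \<in> group_tables. models A p}" for f A
    using that relabel_group_table models_relabel by auto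
  show "\<exists>f\<in>relabel ` Collect relabelling. f ` U \<inter> V \<noteq> {}"
    if "openin group_space U" "openin group_space V" "U \<noteq> {}" "V \<noteq> {}" for U V
    using relabel_image_meets_open[OF that(1,3,2,4)] by blast
qed

theorem corollary5p9:
  shows "\<exists>S. comeager_in group_space S \<and>
           (\<forall>G\<in>S. \<forall>H\<in>group_tables. elem_equiv G H \<longleftrightarrow> H \<in> S)"
proof -
  let ?Mod = "\<lambda>p. {A \<in> group_tables. models A p}"
  have "countable {p. is_sentence p}"
    by simp
  moreover have "?Mod p \<subseteq> topspace group_space" for p
    by (auto simp: topspace_group_space)
  moreover have "meager_in group_space (?Mod p) \<or> meager_in group_space (topspace group_space - ?Mod p)" for p
    by (rule models_meager_or_comeager)
  ultimately obtain S where S: "comeager_in group_space S"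
    and same: "\<forall>G\<in>S. \<forall>H\<in>topspace group_space. (\<forall>p\<in>{p. is_sentence p}. G \<in> ?Mod p \<longleftrightarrow> H \<in> ?Mod p) \<longleftrightarrow> H \<in> S"
    using comeager_class_of_zero_one_family[of "{p. is_sentence p}" ?Mod group_space] by blast
  have "S \<subseteq> group_tables"
    using S unfolding comeager_in_def topspace_group_space by blast
  then have "elem_equiv G H \<longleftrightarrow> H \<in> S" if "G \<in> S" "H \<in> group_tables" for G H
    using same that unfolding elem_equiv_def topspace_group_space by auto
  then show ?thesis
    using S by blast
qed

end
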